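(* Let $T$ be the regular rooted tree of valence $p\geq 2$ with the embedded wire diffeology $\mathcal{D}_T$, and equip $\operatorname{Aut}T$ with the functional diffeology. Then every plot $P:\mathbb{R}\to\operatorname{Aut}T$ of this diffeology is a constant map.
   Context: Fix a finite alphabet $A$ with $|A|=p\geq 2$. The vertices of $T$ are the finite words over $A$ (the root is the empty word); two vertices are joined by an edge iff they have the form $a_1\dots a_n$ and $a_1\dots a_na_{n+1}$. As a topological space, $T$ is the 1-dimensional CW complex obtained by realizing each edge as a copy of $[0,1]$, with its usual topology. $\operatorname{Aut}T$ is the group of bijections of the vertex set fixing the root and preserving adjacency; each is regarded as a homeomorphism of the geometric realization mapping each edge affinely onto its image edge. A diffeology on a set $X$ is a collection of maps $U\to X$ ("plots"), $U$ ranging over open subsets of all $\mathbb{R}^n$, containing all constant maps, closed under precomposition with smooth maps, and satisfying the sheaf condition. The embedded wire diffeology $\mathcal{D}_T$ is the diffeology on $T$ generated by (i.e. the smallest diffeology containing) all maps $\gamma:\mathbb{R}\to T$ that are injective, continuous, and homeomorphisms onto their images. A map between diffeological spaces is smooth if it sends plots to plots. The functional diffeology on $C^\infty(T,T)$ is the coarsest diffeology such that the evaluation map $C^\infty(T,T)\times T\to T$ is smooth (with the product diffeology, the coarsest making projections smooth); $\operatorname{Aut}T\subseteq C^\infty(T,T)$ carries the subset diffeology. Equivalently, $P:U\to\operatorname{Aut}T$ is a plot iff $(u,x)\mapsto P(u)(x)$ is smooth $U\times T\to T$. *)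

theory Defs
  imports "HOL-Analysis.Analysis"
begin

text \<open>R^n is represented as the functions nat => real vanishing at all indices >= n.
  Distances use the sup-norm over the first n coordinates (same topology as Euclidean).\<close>

definition rn :: "nat \<Rightarrow> (nat \<Rightarrow> real) set" where
  "rn n = {x. \<forall>i\<ge>n. x i = 0}"

definition openR :: "nat \<Rightarrow> (nat \<Rightarrow> real) set \<Rightarrow> bool" where
  "openR n U \<longleftrightarrow> U \<subseteq> rn n \<and>
     (\<forall>x\<in>U. \<exists>e>0. \<forall>y\<in>rn n. (\<forall>i<n. \<bar>y i - x i\<bar> < e) \<longrightarrow> y \<in> U)"

definition cont_onR :: "nat \<Rightarrow> (nat \<Rightarrow> real) set \<Rightarrow> ((nat \<Rightarrow> real) \<Rightarrow> real) \<Rightarrow> bool" where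
  "cont_onR n U g \<longleftrightarrow> (\<forall>x\<in>U. \<forall>e>0. \<exists>d>0. \<forall>y\<in>U.
      (\<forall>i<n. \<bar>y i - x i\<bar> < d) \<longrightarrow> \<bar>g y - g x\<bar> < e)"

text \<open>C^infinity real-valued functions on an open U in R^n: all iterated partial derivatives
  exist on U and are continuous on U.  D ks is the iterated partial derivative along the
  coordinate list ks.\<close>

definition smooth_real :: "nat \<Rightarrow> (nat \<Rightarrow> real) set \<Rightarrow> ((nat \<Rightarrow> real) \<Rightarrow> real) \<Rightarrow> bool" where
  "smooth_real n U f \<longleftrightarrow> (\<exists>D :: nat list \<Rightarrow> (nat \<Rightarrow> real) \<Rightarrow> real.
      (\<forall>x\<in>U. D [] x = f x) \<and>
      (\<forall>ks. cont_onR n U (D ks)) \<and>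
      (\<forall>ks. \<forall>i<n. \<forall>x\<in>U.
         ((\<lambda>t. D ks (x(i := x i + t))) has_real_derivative D (i # ks) x) (at 0)))"

definition smooth_map :: "nat \<Rightarrow> (nat \<Rightarrow> real) set \<Rightarrow> nat \<Rightarrow> ((nat \<Rightarrow> real) \<Rightarrow> (nat \<Rightarrow> real)) \<Rightarrow> bool" where
  "smooth_map n V m F \<longleftrightarrow> (\<forall>x\<in>V. F x \<in> rn m) \<and> (\<forall>j<m. smooth_real n V (\<lambda>x. F x j))"

text \<open>A parametrization is a triple (n, U, P) with U an open subset of R^n and P : U -> X
  (values of P outside U are irrelevant).  A diffeology is a set of parametrizations.\<close>

type_synonym 'x param = "nat \<times> (nat \<Rightarrow> real) set \<times> ((nat \<Rightarrow> real) \<Rightarrow> 'x)"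

definition diffeology :: "'x param set \<Rightarrow> bool" where
  "diffeology D \<longleftrightarrow>
     (\<forall>n U P. (n, U, P) \<in> D \<longrightarrow> openR n U) \<and>
     (\<forall>n U P Q. (n, U, P) \<in> D \<and> (\<forall>x\<in>U. P x = Q x) \<longrightarrow> (n, U, Q) \<in> D) \<and>
     (\<forall>n U c. openR n U \<longrightarrow> (n, U, \<lambda>_. c) \<in> D) \<and>
     (\<forall>m U P n V F. (m, U, P) \<in> D \<and> openR n V \<and> smooth_map n V m F \<and> F ` V \<subseteq> U
         \<longrightarrow> (n, V, P \<circ> F) \<in> D) \<and>
     (\<forall>n U P. openR n U \<and>
         (\<forall>x\<in>U. \<exists>V. openR n V \<and> x \<in> V \<and> V \<subseteq> U \<and> (n, V, P) \<in> D)
         \<longrightarrow> (n, U, P) \<in> D)"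

definition generated_diffeology :: "'x param set \<Rightarrow> 'x param set" where
  "generated_diffeology G = \<Inter>{D. diffeology D \<and> G \<subseteq> D}"

definition diff_smooth :: "'x param set \<Rightarrow> 'y param set \<Rightarrow> ('x \<Rightarrow> 'y) \<Rightarrow> bool" where
  "diff_smooth D1 D2 f \<longleftrightarrow> (\<forall>n U P. (n, U, P) \<in> D1 \<longrightarrow> (n, U, f \<circ> P) \<in> D2)"

definition prod_diffeology :: "'x param set \<Rightarrow> 'y param set \<Rightarrow> ('x \<times> 'y) param set" where
  "prod_diffeology D1 D2 = {(n, U, P). (n, U, fst \<circ> P) \<in> D1 \<and> (n, U, snd \<circ> P) \<in> D2}"

definition std_real_diffeology :: "real param set" where
  "std_real_diffeology = {(n, U, f). openR n U \<and> smooth_real n U f}"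

text \<open>The alphabet A is a finite type 'a.  A point of the realization is either the root
  ([], 0) or a pair (w, t) with w a nonempty word and 0 <= t < 1: the point of the edge
  from butlast w to w at distance t from the vertex w.  The vertex w is (w, 0).\<close>

typedef 'a tpt = "{(w :: 'a list, t :: real). (w = [] \<and> t = 0) \<or> (w \<noteq> [] \<and> 0 \<le> t \<and> t < 1)}"
  morphisms rep_tpt Abs_tpt
  by (rule exI[of _ "([], 0)"]) simp

text \<open>Characteristic map of the edge {butlast w, w} (w nonempty), [0,1] -> T, s = 0 at the
  parent vertex and s = 1 at the vertex w.\<close>

definition edge_pt :: "'a list \<Rightarrow> real \<Rightarrow> 'a tpt" where
  "edge_pt w s = (if s \<le> 0 then Abs_tpt (butlast w, 0) else Abs_tpt (w, 1 - s))"

definition tree_top :: "'a tpt topology" where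
  "tree_top = topology (\<lambda>U. \<forall>w. w \<noteq> [] \<longrightarrow>
      openin (top_of_set {0..1::real}) {s \<in> {0..1}. edge_pt w s \<in> U})"

definition embedded_wire :: "(real \<Rightarrow> 'a tpt) \<Rightarrow> bool" where
  "embedded_wire \<gamma> \<longleftrightarrow> inj \<gamma> \<and> continuous_map euclidean tree_top \<gamma> \<and>
     homeomorphic_map euclidean (subtopology tree_top (range \<gamma>)) \<gamma>"

definition wire_diffeology :: "'a tpt param set" where
  "wire_diffeology = generated_diffeology
     {(1, rn 1, \<lambda>x. \<gamma> (x 0)) | \<gamma>. embedded_wire \<gamma>}"

definition tree_adj :: "'a list \<Rightarrow> 'a list \<Rightarrow> bool" where
  "tree_adj u v \<longleftrightarrow> (\<exists>a. v = u @ [a]) \<or> (\<exists>a. u = v @ [a])"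

definition is_tree_aut :: "('a list \<Rightarrow> 'a list) \<Rightarrow> bool" where
  "is_tree_aut \<sigma> \<longleftrightarrow> bij \<sigma> \<and> \<sigma> [] = [] \<and> (\<forall>u v. tree_adj u v \<longleftrightarrow> tree_adj (\<sigma> u) (\<sigma> v))"

text \<open>Geometric realization of a vertex automorphism: each edge mapped affinely.\<close>

definition aut_real :: "('a list \<Rightarrow> 'a list) \<Rightarrow> 'a tpt \<Rightarrow> 'a tpt" where
  "aut_real \<sigma> p = Abs_tpt (\<sigma> (fst (rep_tpt p)), snd (rep_tpt p))"

definition AutT :: "('a tpt \<Rightarrow> 'a tpt) set" where
  "AutT = {aut_real \<sigma> | \<sigma>. is_tree_aut \<sigma>}"

end

theory Submission
  imports Defs
begin

text \<open>Every plot of the wire diffeology is continuous for the CW topology, so for a plot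
  \<open>P\<close> of \<open>Aut T\<close> and a vertex \<open>w\<close> the path \<open>u \<mapsto> P u w\<close> is continuous. It starts in the
  open star of the vertex \<open>P u w\<close>, which contains no other vertex; as \<open>P u\<close> maps vertices
  to vertices, \<open>u \<mapsto> P u w\<close> is locally constant, hence constant on the connected line.\<close>

lemma istopology_tree_top:
  "istopology (\<lambda>U. \<forall>w. w \<noteq> [] \<longrightarrow>
      openin (top_of_set {0..1::real}) {s \<in> {0..1}. edge_pt w s \<in> U})"
  unfolding istopology_def
proof (intro conjI allI impI)
  fix S T :: "'a tpt set" and w :: "'a list"
  assume "\<forall>w. w \<noteq> [] \<longrightarrow> openin (top_of_set {0..1::real}) {s \<in> {0..1}. edge_pt w s \<in> S}"
    and "\<forall>w. w \<noteq> [] \<longrightarrow> openin (top_of_set {0..1::real}) {s \<in> {0..1}. edge_pt w s \<in> T}"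
    and "w \<noteq> []"
  then have "openin (top_of_set {0..1::real})
      ({s \<in> {0..1}. edge_pt w s \<in> S} \<inter> {s \<in> {0..1}. edge_pt w s \<in> T})"
    by (intro openin_Int) auto
  moreover have "{s \<in> {0..1}. edge_pt w s \<in> S} \<inter> {s \<in> {0..1}. edge_pt w s \<in> T} =
      {s \<in> {0..1}. edge_pt w s \<in> S \<inter> T}"
    by auto
  ultimately show "openin (top_of_set {0..1::real}) {s \<in> {0..1}. edge_pt w s \<in> S \<inter> T}"
    by simp
next
  fix K :: "'a tpt set set" and w :: "'a list"
  assume "\<forall>k\<in>K. \<forall>w. w \<noteq> [] \<longrightarrow> openin (top_of_set {0..1::real}) {s \<in> {0..1}. edge_pt w s \<in> k}"
    and "w \<noteq> []"
  then have "openin (top_of_set {0..1::real}) (\<Union>k\<in>K. {s \<in> {0..1}. edge_pt w s \<in> k})"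
    by (intro openin_Union) auto
  moreover have "(\<Union>k\<in>K. {s \<in> {0..1}. edge_pt w s \<in> k}) = {s \<in> {0..1}. edge_pt w s \<in> \<Union>K}"
    by auto
  ultimately show "openin (top_of_set {0..1::real}) {s \<in> {0..1}. edge_pt w s \<in> \<Union>K}"
    by simp
qed

lemma openin_tree_top:
  "openin tree_top U \<longleftrightarrow> (\<forall>w. w \<noteq> [] \<longrightarrow>
      openin (top_of_set {0..1::real}) {s \<in> {0..1}. edge_pt w s \<in> U})"
  by (simp only: tree_top_def topology_inverse'[OF istopology_tree_top])

lemma topspace_tree_top: "topspace tree_top = UNIV"
proof -
  have "openin tree_top UNIV"
    unfolding openin_tree_top by (simp only: UNIV_I simp_thms Collect_mem_eq openin_subtopology_self)
  then show ?thesis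
    using openin_subset by blast
qed

lemma rep_tpt_vertex: "rep_tpt (Abs_tpt (w, 0)) = (w, 0)"
  by (rule Abs_tpt_inverse) auto

lemma rep_tpt_edge: "w \<noteq> [] \<Longrightarrow> 0 < s \<Longrightarrow> s \<le> 1 \<Longrightarrow> rep_tpt (Abs_tpt (w, 1 - s)) = (w, 1 - s)"
  by (rule Abs_tpt_inverse) auto

definition star :: "'a list \<Rightarrow> 'a tpt set" where
  "star v = {p. fst (rep_tpt p) = v \<or> (\<exists>a. fst (rep_tpt p) = v @ [a] \<and> snd (rep_tpt p) > 0)}"

lemma vertex_in_star_iff: "Abs_tpt (w, 0) \<in> star v \<longleftrightarrow> w = v"
  by (simp add: star_def rep_tpt_vertex)

lemma openin_tree_top_star: "openin tree_top (star v)"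
  unfolding openin_tree_top
proof (intro allI impI)
  fix w :: "'a list" assume w: "w \<noteq> []"
  define E where "E = {s \<in> {0..1::real}.
    (s \<le> 0 \<and> butlast w = v) \<or> (s > 0 \<and> (w = v \<or> (\<exists>a. w = v @ [a] \<and> s < 1)))}"
  have "{s \<in> {0..1}. edge_pt w s \<in> star v} = E"
    using w by (auto simp: E_def edge_pt_def star_def rep_tpt_vertex rep_tpt_edge)
  moreover have "openin (top_of_set {0..1}) E"
    unfolding openin_open
  proof (cases "w = v")
    case True
    then have "butlast w \<noteq> v"
      using w by (metis append_butlast_last_id append_self_conv not_Cons_self2)
    then show "\<exists>T. open T \<and> E = {0..1} \<inter> T"
      using True by (intro exI[of _ "{0<..}"]) (auto simp: E_def)
  next
    case False
    show "\<exists>T. open T \<and> E = {0..1} \<inter> T"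
    proof (cases "butlast w = v")
      case True
      then have "w = v @ [last w]"
        using w by (metis append_butlast_last_id)
      then show ?thesis
        using True False by (intro exI[of _ "{..<1}"]) (auto simp: E_def)
    next
      case parent: False
      then have "\<nexists>a. w = v @ [a]"
        by auto
      then show ?thesis
        using False parent by (intro exI[of _ "{}"]) (auto simp: E_def)
    qed
  qed
  ultimately show "openin (top_of_set {0..1}) {s \<in> {0..1}. edge_pt w s \<in> star v}"
    by simp
qed

definition continuous_plots :: "'x topology \<Rightarrow> 'x param set" where
  "continuous_plots X = {(n, U, P). openR n U \<and> (\<forall>x\<in>U. \<forall>W. openin X W \<and> P x \<in> W \<longrightarrow>
      (\<exists>e>0. \<forall>y\<in>U. (\<forall>i<n. \<bar>y i - x i\<bar> < e) \<longrightarrow> P y \<in> W))}"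

lemma finite_common_radius:
  fixes x :: "nat \<Rightarrow> real" and m :: nat
  assumes "\<forall>j<m. \<exists>d>0. \<forall>y\<in>V. (\<forall>i<n. \<bar>y i - x i\<bar> < d) \<longrightarrow> Q j y"
  shows "\<exists>d>0. \<forall>j<m. \<forall>y\<in>V. (\<forall>i<n. \<bar>y i - x i\<bar> < d) \<longrightarrow> Q j y"
  using assms
proof (induction m)
  case 0
  then show ?case
    by (intro exI[of _ 1]) auto
next
  case (Suc m)
  then obtain d1 where d1: "d1 > 0" "\<forall>j<m. \<forall>y\<in>V. (\<forall>i<n. \<bar>y i - x i\<bar> < d1) \<longrightarrow> Q j y"
    by auto
  from Suc.prems obtain d2 where d2: "d2 > 0" "\<forall>y\<in>V. (\<forall>i<n. \<bar>y i - x i\<bar> < d2) \<longrightarrow> Q m y"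
    by auto
  show ?case
  proof (intro exI[of _ "min d1 d2"] conjI allI impI ballI)
    fix j y assume "j < Suc m" "y \<in> V" "\<forall>i<n. \<bar>y i - x i\<bar> < min d1 d2"
    then show "Q j y"
      using d1 d2 by (cases "j = m") auto
  qed (use d1 d2 in simp)
qed

lemma smooth_real_imp_cont_onR: "smooth_real n V f \<Longrightarrow> cont_onR n V f"
  unfolding smooth_real_def cont_onR_def by (metis (no_types, lifting))

lemma continuous_plots_compose_smooth:
  assumes P: "(m, U, P) \<in> continuous_plots X"
    and V: "openR n V" and F: "smooth_map n V m F" "F ` V \<subseteq> U"
  shows "(n, V, P \<circ> F) \<in> continuous_plots X"
proof -
  have P_cont: "\<forall>z\<in>U. \<forall>W. openin X W \<and> P z \<in> W \<longrightarrow>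
      (\<exists>e>0. \<forall>z'\<in>U. (\<forall>j<m. \<bar>z' j - z j\<bar> < e) \<longrightarrow> P z' \<in> W)"
    using P by (simp add: continuous_plots_def)
  have "\<exists>d>0. \<forall>y\<in>V. (\<forall>i<n. \<bar>y i - x i\<bar> < d) \<longrightarrow> P (F y) \<in> W"
    if x: "x \<in> V" and W: "openin X W" "P (F x) \<in> W" for x W
  proof -
    have "F x \<in> U"
      using x F(2) by blast
    then obtain e where e: "e > 0" "\<forall>z\<in>U. (\<forall>j<m. \<bar>z j - F x j\<bar> < e) \<longrightarrow> P z \<in> W"
      using P_cont W by blast
    have "\<exists>d>0. \<forall>y\<in>V. (\<forall>i<n. \<bar>y i - x i\<bar> < d) \<longrightarrow> \<bar>F y j - F x j\<bar> < e" if "j < m" for j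
    proof -
      have "cont_onR n V (\<lambda>y. F y j)"
        using F(1) that smooth_real_imp_cont_onR unfolding smooth_map_def by blast
      then show ?thesis
        using x \<open>e > 0\<close> unfolding cont_onR_def by blast
    qed
    then obtain d where d: "d > 0"
      "\<forall>j<m. \<forall>y\<in>V. (\<forall>i<n. \<bar>y i - x i\<bar> < d) \<longrightarrow> \<bar>F y j - F x j\<bar> < e"
      using finite_common_radius[where Q = "\<lambda>j y. \<bar>F y j - F x j\<bar> < e"] by blast
    have "P (F y) \<in> W" if "y \<in> V" "\<forall>i<n. \<bar>y i - x i\<bar> < d" for y
    proof -
      have "F y \<in> U"
        using F(2) that(1) by blast
      moreover have "\<forall>j<m. \<bar>F y j - F x j\<bar> < e"
        using d(2) that by blast
      ultimately show ?thesis
        using e(2) by blast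
    qed
    then show ?thesis
      using d(1) by blast
  qed
  then show ?thesis
    using V by (simp add: continuous_plots_def)
qed

lemma continuous_plots_cong:
  assumes P: "(n, U, P) \<in> continuous_plots X" and eq: "\<forall>x\<in>U. P x = Q x"
  shows "(n, U, Q) \<in> continuous_plots X"
proof -
  have P_cont: "\<forall>x\<in>U. \<forall>W. openin X W \<and> P x \<in> W \<longrightarrow>
      (\<exists>e>0. \<forall>y\<in>U. (\<forall>i<n. \<bar>y i - x i\<bar> < e) \<longrightarrow> P y \<in> W)"
    using P by (simp add: continuous_plots_def)
  have "\<exists>e>0. \<forall>y\<in>U. (\<forall>i<n. \<bar>y i - x i\<bar> < e) \<longrightarrow> Q y \<in> W"
    if x: "x \<in> U" and W: "openin X W" "Q x \<in> W" for x W
  proof -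
    obtain e where "e > 0" "\<forall>y\<in>U. (\<forall>i<n. \<bar>y i - x i\<bar> < e) \<longrightarrow> P y \<in> W"
      using P_cont x W eq by metis
    then show ?thesis
      using eq by metis
  qed
  then show ?thesis
    using P by (simp add: continuous_plots_def)
qed

lemma continuous_plots_local:
  assumes U: "openR n U"
    and local: "\<forall>x\<in>U. \<exists>V. openR n V \<and> x \<in> V \<and> V \<subseteq> U \<and> (n, V, P) \<in> continuous_plots X"
  shows "(n, U, P) \<in> continuous_plots X"
proof -
  have "\<exists>e>0. \<forall>y\<in>U. (\<forall>i<n. \<bar>y i - x i\<bar> < e) \<longrightarrow> P y \<in> W"
    if x: "x \<in> U" and W: "openin X W" "P x \<in> W" for x W
  proof -
    obtain V where V: "openR n V" "x \<in> V" "V \<subseteq> U" "(n, V, P) \<in> continuous_plots X"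
      using local x by blast
    have "\<forall>z\<in>V. \<forall>W. openin X W \<and> P z \<in> W \<longrightarrow>
        (\<exists>e>0. \<forall>y\<in>V. (\<forall>i<n. \<bar>y i - z i\<bar> < e) \<longrightarrow> P y \<in> W)"
      using V(4) by (simp add: continuous_plots_def)
    then obtain e1 where e1: "e1 > 0" "\<forall>y\<in>V. (\<forall>i<n. \<bar>y i - x i\<bar> < e1) \<longrightarrow> P y \<in> W"
      using V(2) W by blast
    obtain e2 where e2: "e2 > 0" "\<forall>y\<in>rn n. (\<forall>i<n. \<bar>y i - x i\<bar> < e2) \<longrightarrow> y \<in> V"
      using V(1,2) unfolding openR_def by blast
    have "P y \<in> W" if y: "y \<in> U" "\<forall>i<n. \<bar>y i - x i\<bar> < min e1 e2" for y
    proof -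
      have "y \<in> rn n"
        using U y(1) by (auto simp: openR_def)
      then have "y \<in> V"
        using e2(2) y(2) by simp
      then show ?thesis
        using e1(2) y(2) by simp
    qed
    then show ?thesis
      using e1(1) e2(1) by (intro exI[of _ "min e1 e2"]) simp
  qed
  then show ?thesis
    using U by (simp add: continuous_plots_def)
qed

lemma diffeology_continuous_plots: "diffeology (continuous_plots X)"
  unfolding diffeology_def
proof (intro conjI allI impI)
  fix n U P Q assume "(n, U, P) \<in> continuous_plots X \<and> (\<forall>x\<in>U. P x = Q x)"
  then show "(n, U, Q) \<in> continuous_plots X"
    by (blast intro: continuous_plots_cong)
next
  fix n U c assume "openR n U"
  then show "(n, U, \<lambda>_. c) \<in> continuous_plots X"
    unfolding continuous_plots_def by (auto intro: exI[of _ 1])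
next
  fix m U P n V F
  assume "(m, U, P) \<in> continuous_plots X \<and> openR n V \<and> smooth_map n V m F \<and> F ` V \<subseteq> U"
  then show "(n, V, P \<circ> F) \<in> continuous_plots X"
    by (blast intro: continuous_plots_compose_smooth)
next
  fix n U P
  assume "openR n U \<and> (\<forall>x\<in>U. \<exists>V. openR n V \<and> x \<in> V \<and> V \<subseteq> U \<and> (n, V, P) \<in> continuous_plots X)"
  then show "(n, U, P) \<in> continuous_plots X"
    by (blast intro: continuous_plots_local)
qed (simp add: continuous_plots_def)

lemma generated_diffeology_least:
  "diffeology D \<Longrightarrow> G \<subseteq> D \<Longrightarrow> generated_diffeology G \<subseteq> D"
  unfolding generated_diffeology_def by blast

lemma const_in_generated_diffeology:
  "openR n U \<Longrightarrow> (n, U, \<lambda>_. c) \<in> generated_diffeology G"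
  unfolding generated_diffeology_def diffeology_def by blast

lemma openR_rn: "openR n (rn n)"
  unfolding openR_def by (auto intro: exI[of _ 1])

lemma embedded_wire_continuous_plot:
  assumes "embedded_wire \<gamma>"
  shows "(1, rn 1, \<lambda>x. \<gamma> (x 0)) \<in> continuous_plots tree_top"
proof -
  have "\<exists>e>0. \<forall>y\<in>rn 1. \<bar>y 0 - x 0\<bar> < e \<longrightarrow> \<gamma> (y 0) \<in> W"
    if W: "openin tree_top W" "\<gamma> (x 0) \<in> W" for x :: "nat \<Rightarrow> real" and W
  proof -
    have "open {u. \<gamma> u \<in> W}"
      using assms W(1) by (simp add: embedded_wire_def continuous_map_def)
    then obtain e where "e > 0" "\<forall>u. dist u (x 0) < e \<longrightarrow> \<gamma> u \<in> W"
      using W(2) unfolding open_dist by blast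
    then show ?thesis
      by (auto simp: dist_real_def)
  qed
  then show ?thesis
    using openR_rn by (simp add: continuous_plots_def)
qed

lemma wire_diffeology_subset_continuous_plots:
  "wire_diffeology \<subseteq> continuous_plots tree_top"
  unfolding wire_diffeology_def
  by (rule generated_diffeology_least[OF diffeology_continuous_plots])
    (use embedded_wire_continuous_plot in blast)

lemma continuous_map_of_line_plot:
  assumes plot: "(1, rn 1, \<lambda>v. f (v 0)) \<in> continuous_plots X" and "range f \<subseteq> topspace X"
  shows "continuous_map euclidean X f"
proof -
  define lift :: "real \<Rightarrow> nat \<Rightarrow> real" where "lift u = (\<lambda>i. if i = 0 then u else 0)" for u
  have lift: "lift u \<in> rn 1" "lift u 0 = u" for u
    by (simp_all add: lift_def rn_def)
  have plot_cont: "\<forall>x\<in>rn 1. \<forall>W. openin X W \<and> f (x 0) \<in> W \<longrightarrow>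
      (\<exists>e>0. \<forall>y\<in>rn 1. (\<forall>i<1. \<bar>y i - x i\<bar> < e) \<longrightarrow> f (y 0) \<in> W)"
    using plot unfolding continuous_plots_def by blast
  have "open {u. f u \<in> W}" if W: "openin X W" for W
    unfolding open_dist
  proof
    fix u assume "u \<in> {u. f u \<in> W}"
    then have "f (lift u 0) \<in> W"
      by (simp add: lift(2))
    then obtain e where e: "e > 0" "\<forall>y\<in>rn 1. (\<forall>i<1. \<bar>y i - lift u i\<bar> < e) \<longrightarrow> f (y 0) \<in> W"
      using plot_cont lift(1)[of u] W by blast
    have "f u' \<in> W" if "dist u' u < e" for u'
    proof -
      have "(\<forall>i<1. \<bar>lift u' i - lift u i\<bar> < e) \<longrightarrow> f (lift u' 0) \<in> W"
        using e(2) lift(1)[of u'] by blast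
      then show ?thesis
        using that by (simp add: lift_def dist_real_def)
    qed
    then show "\<exists>e>0. \<forall>u'. dist u' u < e \<longrightarrow> u' \<in> {u. f u \<in> W}"
      using e(1) by blast
  qed
  then show ?thesis
    using assms(2) by (auto simp: continuous_map_def)
qed

lemma smooth_real_coordinate:
  assumes "k < n"
  shows "smooth_real n U (\<lambda>x. x k)"
proof -
  define D :: "nat list \<Rightarrow> (nat \<Rightarrow> real) \<Rightarrow> real" where
    "D ks = (if ks = [] then (\<lambda>x. x k) else (\<lambda>_. if ks = [k] then 1 else 0))" for ks
  have "cont_onR n U (D ks)" for ks
    unfolding cont_onR_def
  proof (intro ballI allI impI)
    fix x :: "nat \<Rightarrow> real" and e :: real assume "e > 0"
    then show "\<exists>d>0. \<forall>y\<in>U. (\<forall>i<n. \<bar>y i - x i\<bar> < d) \<longrightarrow> \<bar>D ks y - D ks x\<bar> < e"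
      using assms by (intro exI[of _ e]) (auto simp: D_def)
  qed
  moreover have "((\<lambda>t. D ks (x(i := x i + t))) has_real_derivative D (i # ks) x) (at 0)" for ks i x
  proof (cases "ks = []")
    case True
    have "((\<lambda>t. x k + (if i = k then t else 0)) has_real_derivative (if i = k then 1 else 0)) (at 0)"
      by (cases "i = k") (auto intro!: derivative_eq_intros)
    then show ?thesis
      using True by (cases "i = k") (simp_all add: D_def)
  qed (simp add: D_def)
  ultimately show ?thesis
    unfolding smooth_real_def by (intro exI[of _ D]) (simp add: D_def)
qed

lemma smooth_on_product_imp_continuous_in_parameter:
  fixes F :: "real \<times> 'a tpt \<Rightarrow> 'a tpt"
  assumes "diff_smooth (prod_diffeology std_real_diffeology wire_diffeology) wire_diffeology F"
  shows "continuous_map euclidean tree_top (\<lambda>u. F (u, x))"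
proof -
  have "(1, rn 1, \<lambda>v. (v 0, x)) \<in> prod_diffeology std_real_diffeology wire_diffeology"
    using openR_rn smooth_real_coordinate[of 0 1] const_in_generated_diffeology[OF openR_rn]
    by (simp add: prod_diffeology_def std_real_diffeology_def o_def wire_diffeology_def)
  then have "(1, rn 1, \<lambda>v. F (v 0, x)) \<in> wire_diffeology"
    using assms unfolding diff_smooth_def o_def by blast
  then have "(1, rn 1, \<lambda>v. F (v 0, x)) \<in> continuous_plots tree_top"
    using wire_diffeology_subset_continuous_plots by blast
  then show ?thesis
    by (rule continuous_map_of_line_plot) (simp add: topspace_tree_top)
qed

lemma aut_real_vertex: "aut_real \<sigma> (Abs_tpt (w, 0)) = Abs_tpt (\<sigma> w, 0)"
  by (simp add: aut_real_def rep_tpt_vertex)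

theorem mainTheorem5:
  fixes P :: "real \<Rightarrow> ('a::finite) tpt \<Rightarrow> 'a tpt"
  assumes "CARD('a) \<ge> 2"
    and "\<forall>u. P u \<in> AutT"
    and "diff_smooth (prod_diffeology std_real_diffeology wire_diffeology) wire_diffeology
           (\<lambda>(u, x). P u x)"
  shows "\<exists>c. \<forall>u. P u = c"
proof -
  have "\<forall>u. \<exists>\<sigma>. P u = aut_real \<sigma>"
    using assms(2) by (auto simp: AutT_def)
  then obtain S where S: "\<And>u. P u = aut_real (S u)"
    by metis
  have "S u w = S 0 w" for u w
  proof (rule connected_local_const[OF connected_UNIV UNIV_I UNIV_I, of "\<lambda>u. S u w"], clarify)
    fix u
    have "continuous_map euclidean tree_top (\<lambda>u. P u (Abs_tpt (w, 0)))"
      using smooth_on_product_imp_continuous_in_parameter[OF assms(3)] by simp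
    then have "open {u'. P u' (Abs_tpt (w, 0)) \<in> star (S u w)}"
      using openin_tree_top_star[of "S u w"] by (simp add: continuous_map_def)
    moreover have "u \<in> {u'. P u' (Abs_tpt (w, 0)) \<in> star (S u w)}"
      by (simp add: S aut_real_vertex vertex_in_star_iff)
    ultimately show "eventually (\<lambda>u'. S u w = S u' w) (at u within UNIV)"
      unfolding eventually_at_topological
      by (intro exI[of _ "{u'. P u' (Abs_tpt (w, 0)) \<in> star (S u w)}"])
        (auto simp: S aut_real_vertex vertex_in_star_iff)
  qed
  then have "P u = P 0" for u
    unfolding S by (metis ext)
  then show ?thesis
    by blast
qed

end
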